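(* Let $p$ be a prime, $k$ a positive integer, and $r$ a prime power such that $p$ divides $r-1$ and $r^2+r+1$ divides $p^k+1$. Put $q=p^k$ and $d=r^2+r+1$. Let $D\subseteq\mathbb{Z}/d\mathbb{Z}$ be the Singer difference set. Let $\alpha$ be a primitive element of $\mathbb{F}_{q^2}^\times$, put $\omega=\alpha^{(q^2-1)/d}$, and for $f:\mathbb{Z}/d\mathbb{Z}\to\mathbb{F}_{q^2}$ define $(Tf)(x)=f(x-1)$ and $(Mf)(x)=\omega^x f(x)$. Then $\{M^sT^t\mathbf{1}_D\}_{s,t\in\mathbb{Z}/d\mathbb{Z}}$ is a $(2,1,2d)$-equiangular tight frame of $d^2$ vectors in $\mathbb{F}_{q^2}^d$ (parameters read in $\mathbb{F}_q$).
   Context: Vectors in $\mathbb{F}_{q^2}^d$ are identified with functions $\mathbb{Z}/d\mathbb{Z}\to\mathbb{F}_{q^2}$, and $\mathbf{1}_D$ is the indicator function of $D$. The Singer difference set is a cyclic difference set in $\mathbb{Z}/d\mathbb{Z}$ with parameters $(r^2+r+1,r+1,1)$: $|D|=r+1$ and every nonzero element of $\mathbb{Z}/d\mathbb{Z}$ can be written in exactly one way as $x-y$ with $x,y\in D$. For $a\in\mathbb{F}_{q^2}$ write $\overline{a}=a^q$, and $\langle x,y\rangle=x^*y=\sum_{z}\overline{x(z)}y(z)$. A family $\{y_j\}_{j\in[n]}$ in $\mathbb{F}_{q^2}^d$ is an $(a,b,c)$-equiangular tight frame ($a,b,c\in\mathbb{F}_q$) if it spans $\mathbb{F}_{q^2}^d$,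 $\sum_j\langle y_j,y\rangle y_j=cy$ for all $y$, $\langle y_j,y_j\rangle=a$ for all $j$, and $\langle y_j,y_\ell\rangle\langle y_\ell,y_j\rangle=b$ for all $j\neq\ell$. *)

theory Defs
  imports "HOL-Computational_Algebra.Primes" "HOL-Library.Cardinality"
begin

text \<open>Vectors in F^d are functions nat => 'a, only the coordinates z < d matter
  (Z/dZ is represented by {0..<d}).\<close>

definition herm :: "nat \<Rightarrow> nat \<Rightarrow> (nat \<Rightarrow> 'a::field) \<Rightarrow> (nat \<Rightarrow> 'a) \<Rightarrow> 'a" where
  "herm q d x y = (\<Sum>z<d. (x z) ^ q * y z)"

definition shiftT :: "nat \<Rightarrow> (nat \<Rightarrow> 'a) \<Rightarrow> nat \<Rightarrow> 'a" where
  "shiftT d f x = f ((x + d - 1) mod d)"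

definition modM :: "nat \<Rightarrow> 'a::field \<Rightarrow> (nat \<Rightarrow> 'a) \<Rightarrow> nat \<Rightarrow> 'a" where
  "modM d \<omega> f x = \<omega> ^ x * f x"

definition indic :: "nat set \<Rightarrow> nat \<Rightarrow> 'a::field" where
  "indic D x = (if x \<in> D then 1 else 0)"

definition cyclic_difference_set :: "nat \<Rightarrow> nat \<Rightarrow> nat \<Rightarrow> nat set \<Rightarrow> bool" where
  "cyclic_difference_set d k lam D \<longleftrightarrow> D \<subseteq> {..<d} \<and> card D = k \<and>
     (\<forall>z\<in>{1..<d}. card {(x, y). x \<in> D \<and> y \<in> D \<and> (x + d - y) mod d = z} = lam)"

definition prime_power :: "nat \<Rightarrow> bool" where
  "prime_power r \<longleftrightarrow> (\<exists>l m. prime l \<and> m > 0 \<and> r = l ^ m)"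

definition primitive_elem :: "'a::field \<Rightarrow> bool" where
  "primitive_elem \<alpha> \<longleftrightarrow> \<alpha> \<noteq> 0 \<and> {\<alpha> ^ n | n. True} = UNIV - {0}"

text \<open>(a,b,c)-equiangular tight frame {y j}_{j in J} in F_{q^2}^d, with a,b,c in F_q
  (i.e. fixed by the Frobenius a |-> a^q).\<close>
definition etf :: "nat \<Rightarrow> nat \<Rightarrow> 'b set \<Rightarrow> ('b \<Rightarrow> nat \<Rightarrow> 'a::field) \<Rightarrow> 'a \<Rightarrow> 'a \<Rightarrow> 'a \<Rightarrow> bool" where
  "etf q d J y a b c \<longleftrightarrow> finite J \<and> a ^ q = a \<and> b ^ q = b \<and> c ^ q = c \<and>
     (\<forall>v :: nat \<Rightarrow> 'a. \<exists>coef. \<forall>z<d. v z = (\<Sum>j\<in>J. coef j * y j z)) \<and>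
     (\<forall>v :: nat \<Rightarrow> 'a. \<forall>z<d. (\<Sum>j\<in>J. herm q d (y j) v * y j z) = c * v z) \<and>
     (\<forall>j\<in>J. herm q d (y j) (y j) = a) \<and>
     (\<forall>j\<in>J. \<forall>l\<in>J. j \<noteq> l \<longrightarrow> herm q d (y j) (y l) * herm q d (y l) (y j) = b)"

end

theory Submission
  imports Defs "HOL-Number_Theory.Residues"
begin

(* On the vectors M^s T^t 1_D the Frobenius x \<mapsto> x^q acts as complex conjugation: since d
  divides q + 1, it inverts every power of \<omega>.  The form <M^s T^t 1_D, M^s' T^t' 1_D> is
  therefore the sum of \<rho>^x over x in (D + t) \<inter> (D + t'), where \<rho> = \<omega>^s' / \<omega>^s.
  If t = t' and s \<noteq> s' this is \<rho>^t times the character sum of D at \<rho>, and the difference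
  set property makes its product with the conjugate sum equal to |D| - 1 = r.  If t \<noteq> t',
  the two translates meet in a single point and the product is 1.  As p divides r - 1,
  r = 1 and |D| = r + 1 = 2 in the field.  Tightness follows from the orthogonality of the
  characters x \<mapsto> \<omega>^(s x) and the fact that each point lies in exactly |D| translates of D. *)

section \<open>Subtraction modulo d\<close>

lemma mod_sub_eq_iff_cong:
  assumes "(t::nat) \<le> d" "y < d"
  shows "(x + d - t) mod d = y \<longleftrightarrow> [x = y + t] (mod d)"
proof -
  have "(x + d - t) mod d = y \<longleftrightarrow> [x + d - t = y] (mod d)"
    using assms(2) by (simp add: cong_def)
  also have "\<dots> \<longleftrightarrow> [x + d - t + t = y + t] (mod d)"
    by (simp only: cong_add_rcancel_nat)
  also have "x + d - t + t = x + d" using assms(1) by simp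
  finally show ?thesis by (simp add: cong_def)
qed

lemma mod_sub_add: "(t::nat) \<le> d \<Longrightarrow> ((x + d - t) mod d + t) mod d = x mod d"
  by (simp add: mod_add_left_eq)

lemma add_mod_sub:
  assumes "(t::nat) \<le> d" "a < d"
  shows "((a + t) mod d + d - t) mod d = a"
  using mod_sub_eq_iff_cong[of t d a "(a + t) mod d"] assms by (simp add: cong_def)

lemma mod_sub_mod_sub:
  assumes "(t::nat) < d"
  shows "(z + d - (z + d - t) mod d) mod d = t"
  using mod_sub_eq_iff_cong[of "(z + d - t) mod d" d t z] mod_sub_eq_iff_cong[of t d "(z + d - t) mod d" z] assms
  by (simp add: add.commute)

lemma mod_sub_eq_0_iff:
  assumes "(a::nat) < d" "b < d"
  shows "(a + d - b) mod d = 0 \<longleftrightarrow> a = b"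
  using mod_sub_add[of b d a] assms by auto

lemma mod_sub_mod_sub_add:
  assumes "(t::nat) + u \<le> d"
  shows "((x + d - u) mod d + d - t) mod d = (x + d - (t + u)) mod d"
proof (cases "d = 0")
  case False
  let ?y = "(x + d - (t + u)) mod d"
  have "[x = ?y + (t + u)] (mod d)" "[x = (x + d - u) mod d + u] (mod d)"
    using mod_sub_eq_iff_cong[of "t + u" d ?y x] mod_sub_eq_iff_cong[of u d "(x + d - u) mod d" x] assms False
    by simp_all
  then have "[(x + d - u) mod d + u = (?y + t) + u] (mod d)"
    by (metis add.assoc add.commute cong_sym cong_trans)
  then show ?thesis
    using mod_sub_eq_iff_cong[of t d ?y "(x + d - u) mod d"] assms False by (simp add: cong_add_rcancel_nat)
qed (use assms in simp)

lemma bij_betw_mod_sub: "(t::nat) \<le> d \<Longrightarrow> bij_betw (\<lambda>x. (x + d - t) mod d) {..<d} {..<d}"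
  by (rule bij_betw_byWitness[where f' = "\<lambda>a. (a + t) mod d"])
    (auto simp: mod_sub_add add_mod_sub)

lemma bij_betw_mod_sub_shift: "(z::nat) < d \<Longrightarrow> bij_betw (\<lambda>t. (z + d - t) mod d) {..<d} {..<d}"
  by (rule bij_betw_byWitness[where f' = "\<lambda>t. (z + d - t) mod d"])
    (auto simp: mod_sub_mod_sub)

section \<open>Roots of unity and indicator sums\<close>

lemma sum_powers_root_of_unity:
  fixes \<rho> :: "'a::field"
  assumes "\<rho> ^ d = 1"
  shows "(\<Sum>s<d. \<rho> ^ s) = (if \<rho> = 1 then of_nat d else 0)"
  using assms by (simp add: sum_gp_strict)

lemma power_mod_root_of_unity:
  fixes \<rho> :: "'a::monoid_mult"
  assumes "\<rho> ^ d = 1"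
  shows "\<rho> ^ (n mod d) = \<rho> ^ n"
proof -
  have "\<rho> ^ n = (\<rho> ^ d) ^ (n div d) * \<rho> ^ (n mod d)"
    by (metis div_mult_mod_eq power_add power_mult mult.commute)
  then show ?thesis using assms by simp
qed

lemma indic_eq_of_bool: "indic A x = of_bool (x \<in> A)"
  by (simp add: indic_def)

lemma inverse_of_bool [simp]: "inverse (of_bool b :: 'a::field) = of_bool b"
  by (cases b) simp_all

lemma sum_indic:
  fixes f :: "nat \<Rightarrow> 'a::field"
  assumes "A \<subseteq> {..<d}"
  shows "(\<Sum>x<d. f x * indic A x) = sum f A"
proof -
  have "(\<Sum>x<d. f x * indic A x) = (\<Sum>x\<in>A. f x * indic A x)"
    using assms by (intro sum.mono_neutral_right) (auto simp: indic_def)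
  then show ?thesis by (simp add: indic_def)
qed

section \<open>Cyclic difference sets\<close>

lemma cyclic_difference_set_sum:
  fixes g :: "nat \<Rightarrow> 'a::comm_semiring_1"
  assumes cds: "cyclic_difference_set d kk lam D" and "0 < d"
  shows "(\<Sum>a\<in>D. \<Sum>b\<in>D. g ((a + d - b) mod d))
       = of_nat kk * g 0 + of_nat lam * (\<Sum>z\<in>{1..<d}. g z)"
proof -
  define diff where "diff = (\<lambda>(a, b). (a + d - b) mod d)"
  define fiber where "fiber z = {w \<in> D \<times> D. diff w = z}" for z
  have D: "D \<subseteq> {..<d}" "card D = kk" using cds unfolding cyclic_difference_set_def by auto
  have "finite D" using D(1) finite_subset by blast
  have "diff (a, b) = 0 \<longleftrightarrow> a = b" if "a \<in> D" "b \<in> D" for a b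
  proof -
    have "a < d" "b < d" using that D(1) by auto
    then show ?thesis using mod_sub_eq_0_iff unfolding diff_def by simp
  qed
  then have "fiber 0 = (\<lambda>a. (a, a)) ` D" by (auto simp: fiber_def)
  then have card0: "card (fiber 0) = kk"
    using D(2) by (simp add: card_image inj_on_def)
  have card_nonzero: "card (fiber z) = lam" if "z \<in> {1..<d}" for z
  proof -
    have "fiber z = {(x, y). x \<in> D \<and> y \<in> D \<and> (x + d - y) mod d = z}"
      by (auto simp: fiber_def diff_def)
    then show ?thesis using cds that unfolding cyclic_difference_set_def by simp
  qed
  have "(\<Sum>a\<in>D. \<Sum>b\<in>D. g ((a + d - b) mod d)) = (\<Sum>w\<in>D \<times> D. g (diff w))"
    by (simp add: sum.cartesian_product diff_def case_prod_beta)
  also have "\<dots> = (\<Sum>z<d. \<Sum>w\<in>fiber z. g (diff w))"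
    unfolding fiber_def using \<open>finite D\<close> \<open>0 < d\<close>
    by (intro sum.group[symmetric]) (auto simp: diff_def)
  also have "\<dots> = (\<Sum>z<d. of_nat (card (fiber z)) * g z)"
    by (intro sum.cong refl) (simp add: fiber_def)
  also have "\<dots> = of_nat (card (fiber 0)) * g 0 + (\<Sum>z\<in>{1..<d}. of_nat (card (fiber z)) * g z)"
    using \<open>0 < d\<close> by (simp add: atLeast1_lessThan_eq_remove0 sum.remove)
  also have "\<dots> = of_nat kk * g 0 + of_nat lam * (\<Sum>z\<in>{1..<d}. g z)"
    by (simp add: card0 card_nonzero sum_distrib_left)
  finally show ?thesis .
qed

lemma difference_set_character_sum:
  fixes \<rho> :: "'a::field"
  assumes cds: "cyclic_difference_set d kk lam D" and "0 < d" and "\<rho> ^ d = 1" "\<rho> \<noteq> 1"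
  shows "(\<Sum>a\<in>D. \<rho> ^ a) * (\<Sum>b\<in>D. inverse \<rho> ^ b) = of_nat kk - of_nat lam"
proof -
  have D: "D \<subseteq> {..<d}" using cds unfolding cyclic_difference_set_def by auto
  have "\<rho> \<noteq> 0" using \<open>0 < d\<close> \<open>\<rho> ^ d = 1\<close> by (auto simp: power_0_left)
  have quotient: "\<rho> ^ a * inverse \<rho> ^ b = \<rho> ^ ((a + d - b) mod d)" if "b < d" for a b
  proof -
    have "\<rho> ^ ((a + d - b) mod d) = \<rho> ^ (a + d - b)" by (rule power_mod_root_of_unity) fact
    also have "\<dots> * \<rho> ^ b = \<rho> ^ (a + d)" using that by (simp flip: power_add)
    also have "\<dots> = \<rho> ^ a" using \<open>\<rho> ^ d = 1\<close> by (simp add: power_add)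
    finally show ?thesis using \<open>\<rho> \<noteq> 0\<close> by (simp add: field_simps power_inverse)
  qed
  have "(\<Sum>a\<in>D. \<rho> ^ a) * (\<Sum>b\<in>D. inverse \<rho> ^ b) = (\<Sum>a\<in>D. \<Sum>b\<in>D. \<rho> ^ ((a + d - b) mod d))"
    unfolding sum_product using D by (intro sum.cong refl) (auto simp: quotient)
  also have "\<dots> = of_nat kk + of_nat lam * (\<Sum>z\<in>{1..<d}. \<rho> ^ z)"
    using cyclic_difference_set_sum[OF cds \<open>0 < d\<close>, of "\<lambda>z. \<rho> ^ z"] by simp
  also have "(\<Sum>z\<in>{1..<d}. \<rho> ^ z) = - 1"
    using sum_powers_root_of_unity[OF \<open>\<rho> ^ d = 1\<close>] \<open>0 < d\<close> \<open>\<rho> \<noteq> 1\<close>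
    by (simp add: atLeast1_lessThan_eq_remove0 sum.remove eq_neg_iff_add_eq_0 add.commute)
  finally show ?thesis by simp
qed

definition translate :: "nat \<Rightarrow> nat set \<Rightarrow> nat \<Rightarrow> nat set" where
  "translate d D t = {x \<in> {..<d}. (x + d - t) mod d \<in> D}"

lemma bij_betw_preimage:
  assumes "bij_betw h A B" "C \<subseteq> B"
  shows "bij_betw h {x \<in> A. h x \<in> C} C"
  using assms by (auto simp: bij_betw_def inj_on_def image_iff)

lemma bij_betw_translate:
  assumes "D \<subseteq> {..<d}" "t \<le> d"
  shows "bij_betw (\<lambda>x. (x + d - t) mod d) (translate d D t) D"
  unfolding translate_def using bij_betw_preimage[OF bij_betw_mod_sub[OF assms(2)] assms(1)] .

lemma card_translate:
  assumes "D \<subseteq> {..<d}" "t \<le> d"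
  shows "card (translate d D t) = card D"
  using bij_betw_translate[OF assms] by (rule bij_betw_same_card)

lemma card_translates_containing:
  assumes "D \<subseteq> {..<d}" "z < d"
  shows "card {t \<in> {..<d}. z \<in> translate d D t} = card D"
  using bij_betw_same_card[OF bij_betw_preimage[OF bij_betw_mod_sub_shift[OF assms(2)] assms(1)]] assms(2)
  by (simp add: translate_def)

lemma card_translates_inter:
  assumes cds: "cyclic_difference_set d kk lam D" and "t < d" "t' < d" "t \<noteq> t'"
  shows "card (translate d D t \<inter> translate d D t') = lam"
proof -
  define z where "z = (t' + d - t) mod d"
  define S where "S = translate d D t \<inter> translate d D t'"
  define P where "P = {(a, b). a \<in> D \<and> b \<in> D \<and> (a + d - b) mod d = z}"
  have D: "D \<subseteq> {..<d}" using cds unfolding cyclic_difference_set_def by auto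
  have "z < d" unfolding z_def using assms by simp
  have z: "[t' = z + t] (mod d)" using mod_sub_eq_iff_cong[of t d z t'] assms \<open>z < d\<close> by (simp add: z_def)
  have "z \<noteq> 0" unfolding z_def using mod_sub_eq_0_iff[of t' d t] assms by simp
  then have "card P = lam"
    using cds \<open>z < d\<close> unfolding cyclic_difference_set_def P_def by auto
  have left_inverse: "((a + t) mod d + d - t) mod d = a \<and> ((a + t) mod d + d - t') mod d = b"
    if "(a, b) \<in> P" for a b
  proof -
    have "a < d" "b < d" "[a = z + b] (mod d)"
      using that D mod_sub_eq_iff_cong[of b d z a] \<open>z < d\<close> by (auto simp: P_def)
    have "[a + t = (z + b) + t] (mod d)" using \<open>[a = z + b] (mod d)\<close> by (simp add: cong_add)
    also have "(z + b) + t = b + (z + t)" by simp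
    also have "[\<dots> = b + t'] (mod d)" using z by (simp add: cong_add cong_sym)
    finally have "[a + t = b + t'] (mod d)" .
    then show ?thesis
      using mod_sub_eq_iff_cong[of t' d b] add_mod_sub[of t d a] \<open>a < d\<close> \<open>b < d\<close> assms by simp
  qed
  have maps_to_P: "((x + d - t) mod d, (x + d - t') mod d) \<in> P" if "x \<in> S" for x
  proof -
    define a where "a = (x + d - t) mod d"
    define b where "b = (x + d - t') mod d"
    have "a < d" "b < d" using assms by (simp_all add: a_def b_def)
    then have "[x = a + t] (mod d)" "[x = b + t'] (mod d)"
      using mod_sub_eq_iff_cong[of t d a x] mod_sub_eq_iff_cong[of t' d b x] assms a_def b_def
      by simp_all
    then have "[a + t = b + t'] (mod d)" by (metis cong_sym cong_trans)
    also have "[b + t' = b + (z + t)] (mod d)" using z by (simp add: cong_add)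
    finally have "[a + t = (z + b) + t] (mod d)" by (simp add: add_ac)
    then have "(a + d - b) mod d = z"
      using mod_sub_eq_iff_cong[of b d z a] \<open>z < d\<close> by (simp add: b_def cong_add_rcancel_nat)
    then show ?thesis using that by (simp add: P_def S_def translate_def a_def b_def)
  qed
  have "bij_betw (\<lambda>x. ((x + d - t) mod d, (x + d - t') mod d)) S P"
    by (rule bij_betw_byWitness[where f' = "\<lambda>(a, b). (a + t) mod d"])
      (use left_inverse maps_to_P D \<open>t < d\<close> in \<open>auto simp: S_def translate_def P_def mod_sub_add\<close>)
  then show ?thesis using \<open>card P = lam\<close> by (simp add: S_def translate_def bij_betw_same_card)
qed

lemma sum_power_translate:
  fixes \<rho> :: "'a::field"
  assumes "\<rho> ^ d = 1" "D \<subseteq> {..<d}" "t \<le> d"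
  shows "(\<Sum>x\<in>translate d D t. \<rho> ^ x) = \<rho> ^ t * (\<Sum>a\<in>D. \<rho> ^ a)"
proof -
  have "\<rho> ^ x = \<rho> ^ t * \<rho> ^ ((x + d - t) mod d)" if "x \<in> translate d D t" for x
  proof -
    have "\<rho> ^ x = \<rho> ^ (((x + d - t) mod d + t) mod d)"
      using that assms(3) by (simp add: mod_sub_add translate_def)
    also have "\<dots> = \<rho> ^ t * \<rho> ^ ((x + d - t) mod d)"
      by (simp add: power_mod_root_of_unity[OF assms(1)] power_add mult.commute)
    finally show ?thesis .
  qed
  then have "(\<Sum>x\<in>translate d D t. \<rho> ^ x) = (\<Sum>x\<in>translate d D t. \<rho> ^ t * \<rho> ^ ((x + d - t) mod d))"
    by (rule sum.cong[OF refl])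
  also have "\<dots> = (\<Sum>a\<in>D. \<rho> ^ t * \<rho> ^ a)"
    by (rule sum.reindex_bij_betw[OF bij_betw_translate[OF assms(2,3)]])
  finally show ?thesis by (simp add: sum_distrib_left)
qed

section \<open>Finite fields\<close>

lemma one_less_card_field: "1 < CARD('a::{field,finite})"
  using card_mono[of UNIV "{0, 1 :: 'a}"] by simp

lemma finite_field_power_card_minus_1:
  fixes x :: "'a::{field,finite}"
  assumes "x \<noteq> 0"
  shows "x ^ (CARD('a) - 1) = 1"
proof -
  have "(\<Prod>y\<in>UNIV-{0}. x * y) = (\<Prod>y\<in>UNIV-{0}. y)"
    by (rule prod.reindex_bij_witness[of _ "\<lambda>y. y / x" "\<lambda>y. x * y"]) (use assms in auto)
  then have "x ^ (CARD('a) - 1) * \<Prod>(UNIV-{0::'a}) = 1 * \<Prod>(UNIV-{0::'a})"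
    by (simp add: prod.distrib card_Diff_singleton)
  then show ?thesis by (subst (asm) mult_cancel_right) simp
qed

lemma primitive_elem_power_eq_1_iff:
  fixes \<alpha> :: "'a::{field,finite}"
  assumes "primitive_elem \<alpha>"
  shows "\<alpha> ^ n = 1 \<longleftrightarrow> (CARD('a) - 1) dvd n"
proof
  assume "(CARD('a) - 1) dvd n"
  then obtain k where "n = (CARD('a) - 1) * k" ..
  moreover have "\<alpha> ^ (CARD('a) - 1) = 1"
    using assms unfolding primitive_elem_def by (blast intro: finite_field_power_card_minus_1)
  ultimately show "\<alpha> ^ n = 1" by (simp add: power_mult)
next
  assume "\<alpha> ^ n = 1"
  define N where "N = CARD('a) - 1"
  define m where "m = n mod N"
  have "\<alpha> ^ N = 1"
    using assms unfolding primitive_elem_def N_def by (blast intro: finite_field_power_card_minus_1)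
  have "\<alpha> ^ m = 1"
    using power_mod_root_of_unity[OF \<open>\<alpha> ^ N = 1\<close>] \<open>\<alpha> ^ n = 1\<close> by (simp add: m_def)
  have "UNIV - {0} \<subseteq> (\<lambda>j. \<alpha> ^ j) ` {..<m}" if "m \<noteq> 0"
  proof
    fix x :: 'a assume "x \<in> UNIV - {0}"
    then obtain j where "x = \<alpha> ^ j" using assms unfolding primitive_elem_def by blast
    then have "x = \<alpha> ^ (j mod m)" using power_mod_root_of_unity[OF \<open>\<alpha> ^ m = 1\<close>] by simp
    then show "x \<in> (\<lambda>j. \<alpha> ^ j) ` {..<m}" using that by auto
  qed
  then have "m \<noteq> 0 \<Longrightarrow> N \<le> m"
    using card_mono[of "(\<lambda>j. \<alpha> ^ j) ` {..<m}" "UNIV - {0}"] card_image_le[of "{..<m}" "\<lambda>j. \<alpha> ^ j"]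
    by (simp add: N_def card_Diff_singleton)
  moreover have "0 < N" using one_less_card_field[where 'a = 'a] by (simp add: N_def)
  ultimately have "m = 0" using mod_less_divisor[of N n] by (fastforce simp: m_def)
  then show "(CARD('a) - 1) dvd n" by (simp add: m_def N_def mod_eq_0_iff_dvd)
qed

lemma primitive_elem_power_order:
  fixes \<alpha> :: "'a::{field,finite}"
  assumes "primitive_elem \<alpha>" "d dvd CARD('a) - 1"
  shows "(\<alpha> ^ ((CARD('a) - 1) div d)) ^ n = 1 \<longleftrightarrow> d dvd n"
proof -
  obtain m where m: "CARD('a) - 1 = d * m" using assms(2) ..
  have "0 < CARD('a) - 1" using one_less_card_field[where 'a = 'a] by simp
  then have "0 < m" using m by (cases m) auto
  have "(\<alpha> ^ ((CARD('a) - 1) div d)) ^ n = \<alpha> ^ (m * n)"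
    using m \<open>0 < CARD('a) - 1\<close> by (simp add: power_mult)
  also have "\<dots> = 1 \<longleftrightarrow> d * m dvd m * n"
    using primitive_elem_power_eq_1_iff[OF assms(1)] m by simp
  also have "\<dots> \<longleftrightarrow> d dvd n"
    using \<open>0 < m\<close> by (simp add: mult.commute)
  finally show ?thesis .
qed

lemma CHAR_eq_of_card_prime_power:
  assumes "prime p" "CARD('a::{field,finite}) = p ^ n"
  shows "CHAR('a) = p"
proof -
  have "prime CHAR('a)"
    by (intro prime_CHAR_semidom finite_imp_CHAR_pos) simp
  moreover have "CHAR('a) dvd p ^ n"
    using CHAR_dvd_CARD[where 'a = 'a] assms(2) by simp
  ultimately have "CHAR('a) dvd p" by (blast intro: prime_dvd_power)
  then show ?thesis
    using \<open>prime CHAR('a)\<close> assms(1) by (simp add: primes_dvd_imp_eq)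
qed

lemma of_nat_power_CHAR_power:
  assumes "prime CHAR('a::comm_semiring_1)"
  shows "(of_nat n :: 'a) ^ (CHAR('a) ^ k) = of_nat n"
proof (induction n)
  case 0
  then show ?case using prime_gt_0_nat[OF assms] by (simp add: power_0_left)
next
  case (Suc n)
  then show ?case using assms by (simp add: freshmans_dream')
qed

lemma dvd_square_minus_1:
  assumes "(d::nat) dvd q + 1"
  shows "d dvd q\<^sup>2 - 1"
proof -
  have "q\<^sup>2 - 1 = (q + 1) * (q - 1)" by (cases q) (simp_all add: power2_eq_square algebra_simps)
  then show ?thesis using assms by (metis dvd_mult2)
qed

lemma of_nat_Suc_eq_2:
  assumes "0 < r" "CHAR('a::semiring_1) dvd r - 1"
  shows "of_nat (r + 1) = (2::'a)"
proof -
  have "(of_nat (r - 1) :: 'a) = 0" using assms(2) by (simp add: of_nat_eq_0_iff_char_dvd)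
  then show ?thesis using assms(1) by (cases r) simp_all
qed

lemma of_nat_nonzero_if_dvd_CHAR_power_Suc:
  assumes "prime CHAR('a::semiring_1)" "0 < k" "d dvd CHAR('a) ^ k + 1"
  shows "of_nat d \<noteq> (0::'a)"
proof
  assume "of_nat d = (0::'a)"
  then have "CHAR('a) dvd CHAR('a) ^ k + 1"
    using assms(3) by (metis of_nat_eq_0_iff_char_dvd dvd_trans)
  moreover have "CHAR('a) dvd CHAR('a) ^ k" using assms(2) by simp
  ultimately have "CHAR('a) dvd 1" by (simp only: dvd_add_right_iff)
  then show False using assms(1) by simp
qed

section \<open>The Gabor system of a difference set\<close>

lemma funpow_modM: "(modM d \<omega> ^^ s) f x = \<omega> ^ (x * s) * f x"
  by (induction s) (simp_all add: modM_def power_add mult_ac)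

lemma funpow_shiftT: "t \<le> d \<Longrightarrow> x < d \<Longrightarrow> (shiftT d ^^ t) f x = f ((x + d - t) mod d)"
proof (induction t arbitrary: x)
  case (Suc t)
  then show ?case using mod_sub_mod_sub_add[of t 1 d x] by (simp add: shiftT_def)
qed simp

lemma etf_cong:
  assumes "\<And>j z. j \<in> J \<Longrightarrow> z < d \<Longrightarrow> y j z = y' j z"
  shows "etf q d J y a b c \<longleftrightarrow> etf q d J y' a b c"
proof -
  have "herm q d (y j) w = herm q d (y' j) w" "herm q d w (y j) = herm q d w (y' j)"
    if "j \<in> J" for j w
    using assms that by (simp_all add: herm_def)
  then show ?thesis
    unfolding etf_def using assms by (auto cong: sum.cong)
qed

locale difference_set_gabor =
  fixes q d kk lam :: nat and D :: "nat set" and \<omega> :: "'a::field"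
  assumes q_pos: "0 < q"
    and d_dvd: "d dvd q + 1"
    and omega_order: "\<And>n. \<omega> ^ n = 1 \<longleftrightarrow> d dvd n"
    and difference_set: "cyclic_difference_set d kk lam D"
begin

lemma d_pos: "0 < d"
  using d_dvd by (cases d) auto

lemma D_subset: "D \<subseteq> {..<d}" and card_D: "card D = kk"
  using difference_set unfolding cyclic_difference_set_def by auto

lemma translate_subset: "translate d D t \<subseteq> {..<d}"
  by (auto simp: translate_def)

lemma omega_nonzero: "\<omega> \<noteq> 0"
  using omega_order[of d] d_pos by (auto simp: power_0_left)

lemma omega_power_q: "\<omega> ^ q = inverse \<omega>"
  using omega_order[of "q + 1"] d_dvd omega_nonzero by (simp add: field_simps)

lemma omega_power_eq_iff: "\<omega> ^ m = \<omega> ^ n \<longleftrightarrow> [m = n] (mod d)"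
proof -
  have shift: "\<omega> ^ (m + k) = \<omega> ^ m \<longleftrightarrow> [m + k = m] (mod d)" for m k
  proof -
    have "\<omega> ^ (m + k) = \<omega> ^ m \<longleftrightarrow> \<omega> ^ k = 1" using omega_nonzero by (simp add: power_add)
    then show ?thesis by (simp add: omega_order cong_add_lcancel_0_nat cong_0_iff)
  qed
  show ?thesis
  proof (cases m n rule: le_cases)
    case le
    then obtain k where "n = m + k" using le_Suc_ex by blast
    then show ?thesis using shift[of m k] by (auto simp: cong_sym_eq)
  next
    case ge
    then obtain k where "m = n + k" using le_Suc_ex by blast
    then show ?thesis using shift[of n k] by auto
  qed
qed

lemma omega_ratio_power_d: "(\<omega> ^ m / \<omega> ^ n) ^ d = 1"
  using omega_order[of "m * d"] omega_order[of "n * d"]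
  by (simp add: power_divide flip: power_mult)

lemma omega_ratio_eq_1_iff:
  assumes "m < d" "n < d"
  shows "\<omega> ^ m / \<omega> ^ n = 1 \<longleftrightarrow> m = n"
  using omega_power_eq_iff[of m n] cong_less_modulus_unique_nat[of m n d] assms omega_nonzero
  by auto

lemma omega_orthogonality:
  assumes "x < d" "z < d"
  shows "(\<Sum>s<d. \<omega> ^ (z * s) * inverse (\<omega> ^ (x * s))) = (if x = z then of_nat d else 0)"
proof -
  have "(\<Sum>s<d. \<omega> ^ (z * s) * inverse (\<omega> ^ (x * s))) = (\<Sum>s<d. (\<omega> ^ z / \<omega> ^ x) ^ s)"
    by (simp add: power_mult power_mult_distrib power_inverse divide_inverse)
  also have "\<dots> = (if x = z then of_nat d else 0)"
    using sum_powers_root_of_unity[OF omega_ratio_power_d] omega_ratio_eq_1_iff[OF assms(2,1)] by auto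
  finally show ?thesis .
qed

definition frame_vec :: "nat \<Rightarrow> nat \<Rightarrow> nat \<Rightarrow> 'a" where
  "frame_vec s t x = \<omega> ^ (x * s) * indic (translate d D t) x"

lemma frame_vec_power_q: "frame_vec s t x ^ q = inverse (frame_vec s t x)"
proof -
  have "(\<omega> ^ (x * s)) ^ q = inverse (\<omega> ^ (x * s))"
    by (metis omega_power_q power_inverse power_mult mult.commute)
  then show ?thesis using q_pos by (simp add: frame_vec_def indic_def power_mult_distrib)
qed

lemma herm_frame_vec: "herm q d (frame_vec s t) w = (\<Sum>x<d. inverse (frame_vec s t x) * w x)"
  by (simp add: herm_def frame_vec_power_q)

lemma herm_frame_vecs:
  "herm q d (frame_vec s t) (frame_vec s' t')
     = (\<Sum>x\<in>translate d D t \<inter> translate d D t'. (\<omega> ^ s' / \<omega> ^ s) ^ x)"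
proof -
  have "herm q d (frame_vec s t) (frame_vec s' t')
      = (\<Sum>x<d. (\<omega> ^ s' / \<omega> ^ s) ^ x * indic (translate d D t \<inter> translate d D t') x)"
    unfolding herm_frame_vec
    by (intro sum.cong refl) (simp add: frame_vec_def indic_def power_divide field_simps flip: power_mult)
  also have "\<dots> = (\<Sum>x\<in>translate d D t \<inter> translate d D t'. (\<omega> ^ s' / \<omega> ^ s) ^ x)"
    using translate_subset by (intro sum_indic) blast
  finally show ?thesis .
qed

lemma frame_vec_norm:
  assumes "t < d"
  shows "herm q d (frame_vec s t) (frame_vec s t) = of_nat kk"
  using assms omega_nonzero by (simp add: herm_frame_vecs card_translate D_subset card_D)

lemma frame_vec_cross_same_shift:
  assumes "t < d" "s < d" "s' < d" "s \<noteq> s'"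
  shows "herm q d (frame_vec s t) (frame_vec s' t) * herm q d (frame_vec s' t) (frame_vec s t)
       = of_nat kk - of_nat lam"
proof -
  define \<rho> where "\<rho> = \<omega> ^ s' / \<omega> ^ s"
  have "\<rho> ^ d = 1" "\<rho> \<noteq> 1" "\<omega> ^ s / \<omega> ^ s' = inverse \<rho>"
    using omega_ratio_power_d omega_ratio_eq_1_iff assms by (auto simp: \<rho>_def)
  have "\<rho> \<noteq> 0" using \<open>\<rho> ^ d = 1\<close> d_pos by (auto simp: power_0_left)
  have "inverse \<rho> ^ d = 1" using \<open>\<rho> ^ d = 1\<close> by (simp add: power_inverse)
  have "herm q d (frame_vec s t) (frame_vec s' t) = \<rho> ^ t * (\<Sum>a\<in>D. \<rho> ^ a)"
    using sum_power_translate[OF \<open>\<rho> ^ d = 1\<close> D_subset] assms(1) by (simp add: herm_frame_vecs \<rho>_def)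
  moreover have "herm q d (frame_vec s' t) (frame_vec s t) = inverse \<rho> ^ t * (\<Sum>b\<in>D. inverse \<rho> ^ b)"
    using sum_power_translate[OF \<open>inverse \<rho> ^ d = 1\<close> D_subset] assms(1) \<open>\<omega> ^ s / \<omega> ^ s' = inverse \<rho>\<close>
    by (simp add: herm_frame_vecs)
  ultimately have "herm q d (frame_vec s t) (frame_vec s' t) * herm q d (frame_vec s' t) (frame_vec s t)
      = (\<Sum>a\<in>D. \<rho> ^ a) * (\<Sum>b\<in>D. inverse \<rho> ^ b)"
    using \<open>\<rho> \<noteq> 0\<close> by (simp add: power_inverse)
  also have "\<dots> = of_nat kk - of_nat lam"
    by (rule difference_set_character_sum[OF difference_set d_pos \<open>\<rho> ^ d = 1\<close> \<open>\<rho> \<noteq> 1\<close>])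
  finally show ?thesis .
qed

lemma frame_vec_cross_distinct_shifts:
  assumes "lam = 1" "t < d" "t' < d" "t \<noteq> t'"
  shows "herm q d (frame_vec s t) (frame_vec s' t') * herm q d (frame_vec s' t') (frame_vec s t) = 1"
proof -
  have "card (translate d D t \<inter> translate d D t') = 1"
    using card_translates_inter[OF difference_set assms(2-4)] assms(1) by simp
  then obtain x where "translate d D t \<inter> translate d D t' = {x}"
    by (rule card_1_singletonE)
  then show ?thesis
    using omega_nonzero by (simp add: herm_frame_vecs Int_commute power_divide)
qed

lemma frame_vec_tight:
  assumes "z < d"
  shows "(\<Sum>(s, t)\<in>{..<d} \<times> {..<d}. herm q d (frame_vec s t) v * frame_vec s t z) = of_nat (d * kk) * v z"
proof -
  let ?I = "\<lambda>t x. indic (translate d D t) x :: 'a"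
  have expand: "herm q d (frame_vec s t) v * frame_vec s t z
      = (\<Sum>x<d. ?I t x * ?I t z * v x * (\<omega> ^ (z * s) * inverse (\<omega> ^ (x * s))))" for s t
    by (simp add: herm_frame_vec frame_vec_def sum_distrib_right sum_distrib_left indic_eq_of_bool mult_ac)
  have "(\<Sum>(s, t)\<in>{..<d} \<times> {..<d}. herm q d (frame_vec s t) v * frame_vec s t z)
      = (\<Sum>t<d. \<Sum>s<d. herm q d (frame_vec s t) v * frame_vec s t z)"
    by (simp only: sum.cartesian_product[symmetric]) (rule sum.swap)
  also have "\<dots> = (\<Sum>t<d. \<Sum>x<d. \<Sum>s<d. ?I t x * ?I t z * v x * (\<omega> ^ (z * s) * inverse (\<omega> ^ (x * s))))"
    unfolding expand by (intro sum.cong refl sum.swap)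
  also have "\<dots> = (\<Sum>t<d. \<Sum>x<d. ?I t x * ?I t z * v x * (\<Sum>s<d. \<omega> ^ (z * s) * inverse (\<omega> ^ (x * s))))"
    by (simp only: sum_distrib_left)
  also have "\<dots> = (\<Sum>t<d. ?I t z * (v z * of_nat d))"
  proof (intro sum.cong refl)
    fix t
    have "(\<Sum>x<d. ?I t x * ?I t z * v x * (\<Sum>s<d. \<omega> ^ (z * s) * inverse (\<omega> ^ (x * s))))
        = (\<Sum>x<d. if x = z then ?I t z * ?I t z * v z * of_nat d else 0)"
      using assms by (intro sum.cong refl) (simp add: omega_orthogonality)
    then show "(\<Sum>x<d. ?I t x * ?I t z * v x * (\<Sum>s<d. \<omega> ^ (z * s) * inverse (\<omega> ^ (x * s))))
        = ?I t z * (v z * of_nat d)"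
      using assms by (simp add: indic_eq_of_bool)
  qed
  also have "\<dots> = of_nat (card {t \<in> {..<d}. z \<in> translate d D t}) * (v z * of_nat d)"
    by (simp add: indic_eq_of_bool flip: sum_distrib_right) (simp add: Int_def)
  also have "\<dots> = of_nat (d * kk) * v z"
    using card_translates_containing[OF D_subset assms] by (simp add: card_D)
  finally show ?thesis .
qed

text \<open>Spanning is shown directly: in characteristic 2 the frame bound \<open>2 d\<close> vanishes, so it
  does not follow from tightness.\<close>

lemma frame_vec_spanning:
  assumes "D \<noteq> {}" "of_nat d \<noteq> (0::'a)"
  shows "\<exists>coef. \<forall>z<d. v z = (\<Sum>(s, t)\<in>{..<d} \<times> {..<d}. coef (s, t) * frame_vec s t z)"
proof -
  obtain a where "a \<in> D" using assms(1) by blast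
  then have "a < d" using D_subset by blast
  define p where "p t = (a + t) mod d" for t
  define coef where "coef = (\<lambda>(s, t). v (p t) * inverse (\<omega> ^ (p t * s)) / of_nat d)"
  have "v z = (\<Sum>(s, t)\<in>{..<d} \<times> {..<d}. coef (s, t) * frame_vec s t z)" if "z < d" for z
  proof -
    define t0 where "t0 = (z + d - a) mod d"
    have "t0 < d" using \<open>z < d\<close> by (simp add: t0_def)
    have p_eq_iff: "p t = z \<longleftrightarrow> t = t0" if "t < d" for t
      using mod_sub_eq_iff_cong[of a d t z] \<open>a < d\<close> \<open>z < d\<close> that
      by (auto simp: p_def t0_def cong_def add.commute)
    have "z \<in> translate d D t0"
      using mod_sub_mod_sub[OF \<open>a < d\<close>, of z] \<open>a \<in> D\<close> \<open>z < d\<close> by (simp add: translate_def t0_def)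
    have inner: "(\<Sum>s<d. coef (s, t) * frame_vec s t z)
        = (if t = t0 then v z * indic (translate d D t0) z else 0)" if "t < d" for t
    proof -
      have "(\<Sum>s<d. coef (s, t) * frame_vec s t z)
          = v (p t) / of_nat d * indic (translate d D t) z * (\<Sum>s<d. \<omega> ^ (z * s) * inverse (\<omega> ^ (p t * s)))"
        by (simp add: coef_def frame_vec_def sum_distrib_left mult_ac)
      also have "\<dots> = (if t = t0 then v z * indic (translate d D t0) z else 0)"
        using omega_orthogonality[of "p t" z] p_eq_iff[OF that] p_eq_iff[OF \<open>t0 < d\<close>] \<open>z < d\<close> assms(2)
        by (simp add: p_def)
      finally show ?thesis .
    qed
    have "(\<Sum>(s, t)\<in>{..<d} \<times> {..<d}. coef (s, t) * frame_vec s t z)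
        = (\<Sum>t<d. \<Sum>s<d. coef (s, t) * frame_vec s t z)"
      by (simp only: sum.cartesian_product[symmetric]) (rule sum.swap)
    also have "\<dots> = v z"
      using inner \<open>t0 < d\<close> \<open>z \<in> translate d D t0\<close> by (simp add: indic_def)
    finally show ?thesis by simp
  qed
  then show ?thesis by blast
qed

lemma etf_frame_vec:
  assumes "lam = 1" "D \<noteq> {}" "of_nat kk = (2::'a)" "of_nat d \<noteq> (0::'a)"
    and frobenius_fixes_of_nat: "\<And>n. (of_nat n :: 'a) ^ q = of_nat n"
  shows "etf q d ({..<d} \<times> {..<d}) (\<lambda>(s, t). frame_vec s t) 2 1 (of_nat (2 * d))"
  unfolding etf_def
proof (intro conjI ballI allI impI)
  show "(2::'a) ^ q = 2" "(of_nat (2 * d) :: 'a) ^ q = of_nat (2 * d)"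
    using frobenius_fixes_of_nat[of 2] frobenius_fixes_of_nat[of "2 * d"] by simp_all
  fix v :: "nat \<Rightarrow> 'a"
  show "\<exists>coef. \<forall>z<d. v z = (\<Sum>j\<in>{..<d} \<times> {..<d}. coef j * (case j of (s, t) \<Rightarrow> frame_vec s t) z)"
    using frame_vec_spanning[OF assms(2,4), of v] by (simp add: case_prod_beta')
  fix z assume "z < d"
  then show "(\<Sum>j\<in>{..<d} \<times> {..<d}. herm q d ((case j of (s, t) \<Rightarrow> frame_vec s t)) v
      * (case j of (s, t) \<Rightarrow> frame_vec s t) z) = of_nat (2 * d) * v z"
    using frame_vec_tight[of z v] assms(3) by (simp add: case_prod_beta' mult_ac)
next
  fix j assume "j \<in> {..<d} \<times> {..<d}"
  then show "herm q d ((case j of (s, t) \<Rightarrow> frame_vec s t)) ((case j of (s, t) \<Rightarrow> frame_vec s t)) = 2"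
    using frame_vec_norm assms(3) by auto
next
  fix j l assume "j \<in> {..<d} \<times> {..<d}" "l \<in> {..<d} \<times> {..<d}" "j \<noteq> l"
  then obtain s t s' t' where "j = (s, t)" "l = (s', t')" "s < d" "t < d" "s' < d" "t' < d"
    by auto
  then show "herm q d ((case j of (s, t) \<Rightarrow> frame_vec s t)) ((case l of (s, t) \<Rightarrow> frame_vec s t))
      * herm q d ((case l of (s, t) \<Rightarrow> frame_vec s t)) ((case j of (s, t) \<Rightarrow> frame_vec s t)) = 1"
    using frame_vec_cross_same_shift frame_vec_cross_distinct_shifts assms(1,3) \<open>j \<noteq> l\<close>
    by (cases "t = t'") auto
qed simp_all

end

theorem mainTheorem11:
  fixes p k r q d :: nat and D :: "nat set" and \<alpha> \<omega> :: "'a::{field,finite}"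
  assumes "prime p" and "k > 0" and "prime_power r"
    and "p dvd r - 1" and "(r^2 + r + 1) dvd p^k + 1"
    and "q = p ^ k" and "d = r^2 + r + 1"
    and "CARD('a) = q^2"
    and "cyclic_difference_set d (r + 1) 1 D"
    and "primitive_elem \<alpha>"
    and "\<omega> = \<alpha> ^ ((q^2 - 1) div d)"
  shows "etf q d ({..<d} \<times> {..<d})
           (\<lambda>(s, t). (modM d \<omega> ^^ s) ((shiftT d ^^ t) (indic D)))
           2 1 (of_nat (2 * d))"
proof -
  have char: "CHAR('a) = p"
    using assms(1,6,8) by (intro CHAR_eq_of_card_prime_power[of p "k * 2"]) (simp_all add: power_mult)
  have "d dvd q + 1" using assms(5-7) by simp
  then have "\<omega> ^ n = 1 \<longleftrightarrow> d dvd n" for n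
    using primitive_elem_power_order[OF assms(10)] dvd_square_minus_1 assms(8,11) by simp
  with \<open>d dvd q + 1\<close> interpret difference_set_gabor q d "r + 1" 1 D \<omega>
    using assms(1,6,9) by unfold_locales (simp_all add: prime_gt_0_nat)
  have "0 < r" using assms(3) by (auto simp: prime_power_def prime_gt_0_nat)
  then have "etf q d ({..<d} \<times> {..<d}) (\<lambda>(s, t). frame_vec s t) 2 1 (of_nat (2 * d))"
    using card_D of_nat_power_CHAR_power[of _ k] of_nat_Suc_eq_2[of r] of_nat_nonzero_if_dvd_CHAR_power_Suc[of k d]
      assms(1,2,4-7) char
    by (intro etf_frame_vec) auto
  then show ?thesis
    by (rule etf_cong[THEN iffD1, rotated])
      (auto simp: funpow_modM funpow_shiftT frame_vec_def translate_def indic_def)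
qed

end
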